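(* Let $n\geq 1$ and let $X=(\pi,w)$ be a weighted permutation of degree $n$ with total weight $|w|_1=\sum_{i=1}^n w_i\leq 2$. Then $X$ and $X^\dagger$ have the same weighted cycle type.
   Context: Let $\mathfrak{S}_n$ be the symmetric group on $\{1,\ldots,n\}$. A weighted permutation of degree $n$ is a pair $(\pi,w)$ with $\pi\in\mathfrak{S}_n$ and $w=[w_1,\ldots,w_n]\in\mathbb{Z}_{\geq 0}^n$. Its involution is $(\pi,w)^\dagger=(\pi^{-1},w_{\pi^{-1}})$, where $w_{\pi^{-1}}=[w_{\pi^{-1}(1)},\ldots,w_{\pi^{-1}(n)}]$. To $(\pi,w)$ associate the edge-weighted directed graph $G(\pi,w)$ on vertex set $\{1,\ldots,n\}$ having, for each $i$, one directed edge from $i$ to $\pi(i)$ with weight $w_i$ (a disjoint union of directed cycles). The weighted cycle type of $(\pi,w)$ is the isomorphism class of $G(\pi,w)$, where two such graphs are isomorphic if there is a bijection $f$ of vertex sets such that there is an edge of weight $a$ from $v_1$ to $v_2$ iff there is an edge of weight $a$ from $f(v_1)$ to $f(v_2)$. (Equivalently, weighted cycle types are the orbits of weighted permutations under conjugation $X\mapsto (\sigma,\mathbf{0})X(\sigma^{-1},\mathbf{0})$, $\sigma\in\mathfrak{S}_n$, with multiplication $(\pi,w)\cdot(\pi',w')=(\pi\pi',w_{\pi'}+w')$, $w_{\pi'}=[w_{\pi'(1)},\ldots,w_{\pi'(n)}]$.) *)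

theory Defs
  imports "HOL-Combinatorics.Permutations"
begin

text \<open>A weighted permutation of degree n: a pair (pi, w) with pi a permutation of {1..n}
  and w a weight vector indexed by {1..n} (values of w outside {1..n} are irrelevant).\<close>
definition weighted_perm :: "nat \<Rightarrow> (nat \<Rightarrow> nat) \<times> (nat \<Rightarrow> nat) \<Rightarrow> bool" where
  "weighted_perm n X \<longleftrightarrow> fst X permutes {1..n}"

definition wdagger :: "(nat \<Rightarrow> nat) \<times> (nat \<Rightarrow> nat) \<Rightarrow> (nat \<Rightarrow> nat) \<times> (nat \<Rightarrow> nat)" where
  "wdagger X = (inv (fst X), (\<lambda>i. snd X (inv (fst X) i)))"

definition wedge :: "nat \<Rightarrow> (nat \<Rightarrow> nat) \<times> (nat \<Rightarrow> nat) \<Rightarrow> nat \<Rightarrow> nat \<Rightarrow> nat \<Rightarrow> bool" where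
  "wedge n X i j a \<longleftrightarrow> i \<in> {1..n} \<and> j = fst X i \<and> a = snd X i"

text \<open>Same weighted cycle type: G(X) and G(Y) are isomorphic as edge-weighted digraphs
  on vertex set {1..n}.\<close>
definition same_wct :: "nat \<Rightarrow> (nat \<Rightarrow> nat) \<times> (nat \<Rightarrow> nat) \<Rightarrow> (nat \<Rightarrow> nat) \<times> (nat \<Rightarrow> nat) \<Rightarrow> bool" where
  "same_wct n X Y \<longleftrightarrow> (\<exists>f. bij_betw f {1..n} {1..n} \<and>
     (\<forall>v1\<in>{1..n}. \<forall>v2\<in>{1..n}. \<forall>a. wedge n X v1 v2 a \<longleftrightarrow> wedge n Y (f v1) (f v2) a))"

end

theory Submission
  imports Defs "HOL-Combinatorics.Orbits"
begin

text \<open>The graph of the involution \<open>X\<^sup>\<dagger>\<close> is the graph of \<open>X\<close> with every edge reversed, so it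
  suffices to reverse each weighted cycle of \<open>X\<close> by an isomorphism. Since the total weight is
  at most 2, every cycle carries at most two nonzero weights, and if it carries two they are
  both 1. A reflection of the cycle exchanging the two weighted vertices \<open>p\<close> and \<open>q\<close>, i.e.
  \<open>\<pi>\<^sup>k p \<mapsto> \<pi>\<^sup>-\<^sup>k q\<close>, then preserves the weights, and composing it with \<open>\<pi>\<close> gives the required
  isomorphism.\<close>

lemma nonzero_weights_in_equal_pair:
  fixes w :: "'a \<Rightarrow> nat"
  assumes "finite A" "sum w A \<le> 2" "x \<in> A"
  obtains p q where "p \<in> A" "q \<in> A" "w p = w q" "\<forall>y\<in>A. w y \<noteq> 0 \<longrightarrow> y = p \<or> y = q"
proof -
  define Z where "Z = {y\<in>A. w y \<noteq> 0}"
  have "finite Z" using assms(1) by (simp add: Z_def)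
  have sum_Z: "sum w Z \<le> 2"
    using sum_mono2[OF assms(1), of Z w] assms(2) by (auto simp: Z_def)
  have "card Z \<le> sum w Z"
    using card_eq_sum[of Z] sum_mono[of Z "\<lambda>_. 1" w] by (auto simp: Z_def)
  then consider "card Z = 0" | "card Z = 1" | "card Z = 2" using sum_Z by linarith
  then show ?thesis
  proof cases
    case 1
    then have "Z = {}" using \<open>finite Z\<close> by simp
    then show ?thesis using that[of x x] assms(3) by (auto simp: Z_def)
  next
    case 2
    then obtain z where "Z = {z}" by (rule card_1_singletonE)
    then show ?thesis using that[of z z] by (auto simp: Z_def)
  next
    case 3
    then obtain y z where yz: "Z = {y, z}" "y \<noteq> z" by (auto simp: card_2_iff)
    then have "w y + w z \<le> 2" "w y \<noteq> 0" "w z \<noteq> 0" using sum_Z by (auto simp: Z_def)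
    then have "w y = w z" by linarith
    then show ?thesis using that[of y z] yz by (auto simp: Z_def)
  qed
qed

lemma funpow_funpow_commute: "(f ^^ j) ((f ^^ k) x) = (f ^^ k) ((f ^^ j) x)"
  by (metis add.commute comp_apply funpow_add)

lemma funpow_eq_on_orbit:
  assumes "(f ^^ j) p = (f ^^ k) p" "y \<in> orbit f p"
  shows "(f ^^ j) y = (f ^^ k) y"
proof -
  obtain b where "y = (f ^^ b) p" using assms(2) by (auto simp: orbit_altdef)
  then show ?thesis
    using assms(1) funpow_funpow_commute by metis
qed

definition reflection :: "('a \<Rightarrow> 'a) \<Rightarrow> 'a \<Rightarrow> 'a \<Rightarrow> 'a \<Rightarrow> 'a" where
  "reflection P p q x = (inv P ^^ funpow_dist P p x) q"

context
  fixes P :: "'a \<Rightarrow> 'a"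
  assumes perm: "permutation P"
begin

lemma inv_funpow_funpow: "(inv P ^^ k) ((P ^^ k) x) = x"
  using inv_fn_o_fn_is_id[OF permutation_bijective[OF perm]] by (metis comp_apply)

lemma funpow_inv_funpow: "(P ^^ k) ((inv P ^^ k) x) = x"
  using fn_o_inv_fn_is_id[OF permutation_bijective[OF perm]] by (metis comp_apply)

lemma orbit_eq_if_in_orbit: "y \<in> orbit P x \<Longrightarrow> orbit P y = orbit P x"
  by (rule orbit_cyclic_eq3[OF cyclic_on_orbit'[OF perm]])

lemma inv_funpow_in_orbit: "(inv P ^^ k) x \<in> orbit P x"
proof -
  have "x \<in> orbit (inv P) x"
    by (simp add: orbit_inv_eq perm permutation_self_in_orbit)
  then show ?thesis by (metis funpow_in_orbit orbit_inv_eq perm)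
qed

lemma inv_funpow_eq_on_orbit:
  assumes "(P ^^ j) p = (P ^^ k) p" "y \<in> orbit P p"
  shows "(inv P ^^ j) y = (inv P ^^ k) y"
proof -
  define z where "z = (inv P ^^ j) y"
  have "z \<in> orbit P p"
    using inv_funpow_in_orbit assms(2) orbit_eq_if_in_orbit unfolding z_def by blast
  then have "(P ^^ k) z = y"
    using funpow_eq_on_orbit[OF assms(1)] funpow_inv_funpow unfolding z_def by metis
  then show ?thesis using inv_funpow_funpow unfolding z_def by metis
qed

context
  fixes p q :: 'a
  assumes q_in_orbit: "q \<in> orbit P p"
begin

lemma reflection_funpow: "reflection P p q ((P ^^ k) p) = (inv P ^^ k) q"
proof -
  have "(P ^^ k) p \<in> orbit P p" by (auto simp: orbit_altdef_permutation perm)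
  then show ?thesis
    unfolding reflection_def by (intro inv_funpow_eq_on_orbit[OF funpow_dist_prop q_in_orbit])
qed

lemma reflection_in_orbit: "reflection P p q x \<in> orbit P p"
  unfolding reflection_def
  using inv_funpow_in_orbit orbit_eq_if_in_orbit[OF q_in_orbit] by blast

lemma reflection_step:
  assumes "x \<in> orbit P p"
  shows "reflection P p q (P x) = inv P (reflection P p q x)"
proof -
  obtain k where x: "x = (P ^^ k) p" using assms by (auto simp: orbit_altdef_permutation perm)
  have "reflection P p q (P x) = (inv P ^^ Suc k) q"
    using reflection_funpow[of "Suc k"] by (simp add: x)
  also have "\<dots> = inv P (reflection P p q x)" by (simp add: x reflection_funpow)
  finally show ?thesis .
qed

lemma reflection_reflection:
  assumes "x \<in> orbit P p"
  shows "reflection P p q (reflection P p q x) = x"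
proof -
  obtain k where x: "x = (P ^^ k) p" using assms by (auto simp: orbit_altdef_permutation perm)
  obtain j where j: "reflection P p q x = (P ^^ j) p"
    using reflection_in_orbit by (auto simp: orbit_altdef_permutation perm)
  have "(inv P ^^ k) q = (P ^^ j) p" using j by (simp add: x reflection_funpow)
  then have "(P ^^ k) ((P ^^ j) p) = q" using funpow_inv_funpow[of k q] by simp
  then have "(P ^^ j) ((P ^^ k) p) = q" by (simp add: funpow_funpow_commute)
  then have "(inv P ^^ j) q = (P ^^ k) p" using inv_funpow_funpow[of j "(P ^^ k) p"] by simp
  then show ?thesis using j x by (simp add: reflection_funpow)
qed

lemma reflection_base: "reflection P p q p = q"
  using reflection_funpow[of 0] by simp

lemma reflection_apex: "reflection P p q q = p"
  using reflection_reflection[of p] reflection_base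
  by (simp add: perm permutation_self_in_orbit)

lemma reflection_preserves_weight:
  assumes "w p = w q" "\<forall>y\<in>orbit P p. w y \<noteq> 0 \<longrightarrow> y = p \<or> y = q" "x \<in> orbit P p"
  shows "w (reflection P p q x) = w x"
proof -
  consider "x = p" | "x = q" | "x \<noteq> p" "x \<noteq> q" by blast
  then show ?thesis
  proof cases
    case 3
    have "reflection P p q x \<noteq> p"
      using reflection_reflection[OF assms(3)] reflection_base 3(2) by metis
    moreover have "reflection P p q x \<noteq> q"
      using reflection_reflection[OF assms(3)] reflection_apex 3(1) by metis
    ultimately have "w (reflection P p q x) = 0" using assms(2) reflection_in_orbit by blast
    moreover have "w x = 0" using assms(2,3) 3 by blast
    ultimately show ?thesis by simp
  qed (use assms(1) reflection_base reflection_apex in auto)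
qed

end

end

lemma weight_preserving_reflection_exists:
  fixes w :: "'a \<Rightarrow> nat"
  assumes perm: "P permutes S" "finite S"
    and pairs: "\<And>x. x \<in> S \<Longrightarrow> \<exists>p\<in>orbit P x. \<exists>q\<in>orbit P x.
                  w p = w q \<and> (\<forall>y\<in>orbit P x. w y \<noteq> 0 \<longrightarrow> y = p \<or> y = q)"
  obtains \<rho> where "bij_betw \<rho> S S" "\<And>x. x \<in> S \<Longrightarrow> \<rho> (P x) = inv P (\<rho> x)"
    "\<And>x. x \<in> S \<Longrightarrow> w (\<rho> x) = w x"
proof -
  have perm': "permutation P" using perm permutation_permutes by blast
  define pair where "pair C = (SOME (p, q). p \<in> C \<and> q \<in> C \<and> w p = w q
                                  \<and> (\<forall>y\<in>C. w y \<noteq> 0 \<longrightarrow> y = p \<or> y = q))" for C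
  define \<rho> where "\<rho> x = (case pair (orbit P x) of (p, q) \<Rightarrow> reflection P p q x)" for x
  have on_orbit: "\<exists>p q. q \<in> orbit P p \<and> x \<in> orbit P p \<and> orbit P p \<subseteq> S \<and> w p = w q
      \<and> (\<forall>y\<in>orbit P p. w y \<noteq> 0 \<longrightarrow> y = p \<or> y = q) \<and> (\<forall>y\<in>orbit P p. \<rho> y = reflection P p q y)"
    if "x \<in> S" for x
  proof -
    obtain p q where pq: "pair (orbit P x) = (p, q)" by fastforce
    have "\<exists>pq. case pq of (p, q) \<Rightarrow> p \<in> orbit P x \<and> q \<in> orbit P x \<and> w p = w q
                                  \<and> (\<forall>y\<in>orbit P x. w y \<noteq> 0 \<longrightarrow> y = p \<or> y = q)"
      using pairs[OF that] by auto
    from someI_ex[OF this]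
    have "p \<in> orbit P x" "q \<in> orbit P x" "w p = w q" "\<forall>y\<in>orbit P x. w y \<noteq> 0 \<longrightarrow> y = p \<or> y = q"
      using pq unfolding pair_def by auto
    moreover have "orbit P p = orbit P x"
      using \<open>p \<in> orbit P x\<close> by (rule orbit_eq_if_in_orbit[OF perm'])
    moreover have "\<rho> y = reflection P p q y" if "y \<in> orbit P x" for y
      using that pq orbit_eq_if_in_orbit[OF perm'] by (simp add: \<rho>_def)
    moreover have "x \<in> orbit P x" by (rule permutation_self_in_orbit[OF perm'])
    moreover have "orbit P x \<subseteq> S" by (rule permutes_orbit_subset[OF perm(1) that])
    ultimately show ?thesis by (intro exI[of _ p] exI[of _ q]) simp
  qed
  have \<rho>_\<rho>: "\<rho> (\<rho> x) = x" and \<rho>_in_S: "\<rho> x \<in> S" if "x \<in> S" for x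
  proof -
    obtain p q where q: "q \<in> orbit P p" and x: "x \<in> orbit P p" and "orbit P p \<subseteq> S"
      and \<rho>: "\<forall>y\<in>orbit P p. \<rho> y = reflection P p q y"
      using on_orbit[OF \<open>x \<in> S\<close>] by blast
    have "\<rho> x \<in> orbit P p" using x \<rho> reflection_in_orbit[OF perm' q] by simp
    then show "\<rho> (\<rho> x) = x" "\<rho> x \<in> S"
      using x \<rho> reflection_reflection[OF perm' q x] \<open>orbit P p \<subseteq> S\<close> by auto
  qed
  show ?thesis
  proof
    show "bij_betw \<rho> S S" by (rule bij_betw_byWitness[of S \<rho>]) (auto simp: \<rho>_\<rho> \<rho>_in_S)
  next
    fix x assume "x \<in> S"
    then obtain p q where q: "q \<in> orbit P p" and x: "x \<in> orbit P p" and "w p = w q"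
      and nonzero: "\<forall>y\<in>orbit P p. w y \<noteq> 0 \<longrightarrow> y = p \<or> y = q"
      and \<rho>: "\<forall>y\<in>orbit P p. \<rho> y = reflection P p q y"
      using on_orbit by blast
    have "P x \<in> orbit P p" using x by (rule orbit.step)
    then show "\<rho> (P x) = inv P (\<rho> x)" using x \<rho> reflection_step[OF perm' q x] by simp
    show "w (\<rho> x) = w x"
      using x \<rho> reflection_preserves_weight[OF perm' q \<open>w p = w q\<close> nonzero x] by simp
  qed
qed

lemma same_wct_wdagger_if_reflection:
  assumes perm: "P permutes {1..n}" and bij: "bij_betw \<rho> {1..n} {1..n}"
    and reverses: "\<And>x. x \<in> {1..n} \<Longrightarrow> \<rho> (P x) = inv P (\<rho> x)"
    and weight: "\<And>x. x \<in> {1..n} \<Longrightarrow> w (\<rho> x) = w x"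
  shows "same_wct n (P, w) (wdagger (P, w))"
proof -
  define f where "f = P \<circ> \<rho>"
  have bij_f: "bij_betw f {1..n} {1..n}"
    unfolding f_def using bij permutes_imp_bij[OF perm] by (rule bij_betw_trans)
  have inv_f: "inv P (f x) = \<rho> x" for x
    unfolding f_def by (simp add: permutes_inverses(2)[OF perm])
  have f_P: "f (P x) = \<rho> x" if "x \<in> {1..n}" for x
    unfolding f_def by (simp add: reverses[OF that] permutes_inverses(1)[OF perm])
  have "wedge n (P, w) v1 v2 a \<longleftrightarrow> wedge n (wdagger (P, w)) (f v1) (f v2) a"
    if v: "v1 \<in> {1..n}" "v2 \<in> {1..n}" for v1 v2 a
  proof -
    have "P v1 \<in> {1..n}" using permutes_in_image[OF perm] v(1) by blast
    then have "f v2 = \<rho> v1 \<longleftrightarrow> v2 = P v1"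
      using inj_on_eq_iff[OF bij_betw_imp_inj_on[OF bij_f] v(2)] f_P[OF v(1)] by metis
    moreover have "f v1 \<in> {1..n}" using bij_betwE[OF bij_f] v(1) by blast
    ultimately show ?thesis
      using v(1) weight[OF v(1)] inv_f[of v1] by (auto simp: wedge_def wdagger_def)
  qed
  then show ?thesis unfolding same_wct_def using bij_f by blast
qed

theorem lemma2p12:
  fixes n :: nat and X :: "(nat \<Rightarrow> nat) \<times> (nat \<Rightarrow> nat)"
  assumes "n \<ge> 1"
    and "weighted_perm n X"
    and "(\<Sum>i=1..n. snd X i) \<le> 2"
  shows "same_wct n X (wdagger X)"
proof -
  obtain P w where X: "X = (P, w)" by fastforce
  have perm: "P permutes {1..n}" using assms(2) by (simp add: weighted_perm_def X)
  have pairs: "\<exists>p\<in>orbit P x. \<exists>q\<in>orbit P x. w p = w q \<and> (\<forall>y\<in>orbit P x. w y \<noteq> 0 \<longrightarrow> y = p \<or> y = q)"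
    if "x \<in> {1..n}" for x
  proof -
    have orbit_sub: "orbit P x \<subseteq> {1..n}" by (rule permutes_orbit_subset[OF perm that])
    then have fin: "finite (orbit P x)" by (rule finite_subset) simp
    have "sum w (orbit P x) \<le> sum w {1..n}" by (rule sum_mono2[OF _ orbit_sub]) simp_all
    also have "\<dots> \<le> 2" using assms(3) by (simp add: X)
    finally have "sum w (orbit P x) \<le> 2" .
    moreover have "x \<in> orbit P x"
      using perm by (intro permutation_self_in_orbit) (auto simp: permutation_permutes)
    ultimately obtain p q where "p \<in> orbit P x" "q \<in> orbit P x" "w p = w q"
        "\<forall>y\<in>orbit P x. w y \<noteq> 0 \<longrightarrow> y = p \<or> y = q"
      by (rule nonzero_weights_in_equal_pair[OF fin])
    then show ?thesis by blast
  qed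
  obtain \<rho> where "bij_betw \<rho> {1..n} {1..n}" "\<And>x. x \<in> {1..n} \<Longrightarrow> \<rho> (P x) = inv P (\<rho> x)"
    "\<And>x. x \<in> {1..n} \<Longrightarrow> w (\<rho> x) = w x"
    using weight_preserving_reflection_exists[OF perm finite_atLeastAtMost pairs] by blast
  then show ?thesis unfolding X by (rule same_wct_wdagger_if_reflection[OF perm])
qed

end
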